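(* Let $S$ be a semiring and let $\mathcal{A}=(A,X,Y,\sigma^A,\delta^A,\omega^A)$ be a Mealy-type weighted automaton over $S$. Then there exists a Moore-type weighted automaton $\mathcal{B}=(B,X,Y,\sigma^B,\delta^B,\omega^B)$ over $S$ such that $[\![\mathcal{A}]\!]_{1n}=[\![\mathcal{B}]\!]_{1n}$ and $[\![\mathcal{A}]\!]_{n1}=[\![\mathcal{B}]\!]_{n1}$. Moreover, $\mathcal{B}$ can be chosen with $|B|\le |A|\cdot(|X|+1)$.
   Context: A semiring $(S,+,\cdot,0,1)$ is a set with $(S,+,0)$ a commutative monoid, $(S,\cdot,1)$ a monoid (not necessarily commutative), $\cdot$ distributing over $+$ on both sides, and $0\cdot s=s\cdot 0=0$. $(X\times Y)^*$ is identified with the set of pairs $(u,v)\in X^*\times Y^*$ with $|u|=|v|$; its empty element is $(\varepsilon,\varepsilon)$. All automata have finite nonempty state set and finite nonempty alphabets $X,Y$. For a map $\delta:Q\times X\times Q\to S$ write $\delta_x(p,q)=\delta(p,x,q)$ (a $Q\times Q$ matrix over $S$), and for a word $w=z_1\cdots z_m\in X^+$ let $\delta_w=\delta_{z_1}\cdot\delta_{z_2}\cdots\delta_{z_m}$ (matrix product, $(\mu_1\cdot\mu_2)(p,q)=\sum_{r\in Q}\mu_1(p,r)\cdot\mu_2(r,q)$). A Mealy-type weighted automaton over $S$ is $\mathcal{A}=(A,X,Y,\sigma,\delta,\omega)$ with $\sigma:A\to S$, $\delta:A\times X\times A\to S$, $\omega:A\times X\times Y\to S$; write $\omega_{x,y}(a)=\omega(a,x,y)$.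 For both behaviors below, the value at $(\varepsilon,\varepsilon)$ is $\sum_{a\in A}\sigma(a)$. For $u=x_1\cdots x_n$, $v=y_1\cdots y_n$ with $n\ge 1$: $[\![\mathcal{A}]\!]_{1n}(u,v)=\sum_{(a_0,\dots,a_{n-1})\in A^{n}}\sigma(a_0)\cdot\omega_{x_1,y_1}(a_0)\cdot\delta_{x_1}(a_0,a_1)\cdot\omega_{x_2,y_2}(a_1)\cdot\delta_{x_2}(a_1,a_2)\cdots\omega_{x_{n-1},y_{n-1}}(a_{n-2})\cdot\delta_{x_{n-1}}(a_{n-2},a_{n-1})\cdot\omega_{x_n,y_n}(a_{n-1})$; $[\![\mathcal{A}]\!]_{n1}(u,v)=\sum_{(a_0,\dots,a_{n-1})\in A^{n}}\sigma(a_0)\cdot\omega_{x_1,y_1}(a_0)\cdot\delta_{x_1}(a_0,a_1)\cdot\omega_{x_2,y_2}(a_1)\cdot\delta_{x_1x_2}(a_0,a_2)\cdot\omega_{x_3,y_3}(a_2)\cdots\delta_{x_1\cdots x_{n-1}}(a_0,a_{n-1})\cdot\omega_{x_n,y_n}(a_{n-1})$. A Moore-type weighted automaton over $S$ is $\mathcal{B}=(B,X,Y,\sigma,\delta,\omega)$ with $\sigma:B\to S$, $\delta:B\times X\times B\to S$, $\omega:B\times Y\to S$; write $\omega_y(b)=\omega(b,y)$. Both behaviors have value $\sum_{b\in B}\sigma(b)$ at $(\varepsilon,\varepsilon)$, and for $u=x_1\cdots x_n$, $v=y_1\cdots y_n$, $n\ge1$: $[\![\mathcal{B}]\!]_{1n}(u,v)=\sum_{(b_0,\dots,b_n)\in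 B^{n+1}}\sigma(b_0)\cdot\delta_{x_1}(b_0,b_1)\cdot\omega_{y_1}(b_1)\cdot\delta_{x_2}(b_1,b_2)\cdot\omega_{y_2}(b_2)\cdots\delta_{x_n}(b_{n-1},b_n)\cdot\omega_{y_n}(b_n)$; $[\![\mathcal{B}]\!]_{n1}(u,v)=\sum_{(b_0,\dots,b_n)\in B^{n+1}}\sigma(b_0)\cdot\delta_{x_1}(b_0,b_1)\cdot\omega_{y_1}(b_1)\cdot\delta_{x_1x_2}(b_0,b_2)\cdot\omega_{y_2}(b_2)\cdots\delta_{x_1\cdots x_n}(b_0,b_n)\cdot\omega_{y_n}(b_n)$. *)

theory Defs
  imports Main
begin

text \<open>Semiring: the class combination {semiring_0, monoid_mult} is exactly a (not
necessarily commutative) semiring with 0 and 1 (no 0 \<noteq> 1 assumption).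
States of an automaton are a finite nonempty set Q; a word x_1...x_n is a list;
transition weights are given as a function d p x q = delta(p,x,q).\<close>

text \<open>delta_w for a word w (matrix product over Q); only used for nonempty w.\<close>
fun dword :: "'q set \<Rightarrow> ('q \<Rightarrow> 'x \<Rightarrow> 'q \<Rightarrow> 's::{semiring_0,monoid_mult}) \<Rightarrow> 'x list \<Rightarrow> 'q \<Rightarrow> 'q \<Rightarrow> 's"
where
  "dword Q d [] p q = (if p = q then 1 else 0)"
| "dword Q d [x] p q = d p x q"
| "dword Q d (x # y # w) p q = (\<Sum>r\<in>Q. d p x r * dword Q d (y # w) r q)"

definition state_seqs :: "'q set \<Rightarrow> nat \<Rightarrow> 'q list set" where
  "state_seqs Q n = {qs. length qs = n \<and> set qs \<subseteq> Q}"

text \<open>Mealy automaton (A, X, Y, sg, d, om): sg :: A -> S, d :: A x X x A -> S,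
 om :: A x X x Y -> S.  Behaviours evaluated at (u,v) with |u| = |v|.\<close>
definition mealy_1n :: "'a set \<Rightarrow> ('a \<Rightarrow> 's::{semiring_0,monoid_mult}) \<Rightarrow> ('a \<Rightarrow> 'x \<Rightarrow> 'a \<Rightarrow> 's)
    \<Rightarrow> ('a \<Rightarrow> 'x \<Rightarrow> 'y \<Rightarrow> 's) \<Rightarrow> 'x list \<Rightarrow> 'y list \<Rightarrow> 's" where
  "mealy_1n A sg d om u v =
    (if u = [] then (\<Sum>a\<in>A. sg a)
     else (\<Sum>as\<in>state_seqs A (length u).
            sg (as ! 0) * prod_list (map (\<lambda>i. om (as ! i) (u ! i) (v ! i) *
                 (if i + 1 < length u then d (as ! i) (u ! i) (as ! (i + 1)) else 1))
               [0..<length u])))"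

definition mealy_n1 :: "'a set \<Rightarrow> ('a \<Rightarrow> 's::{semiring_0,monoid_mult}) \<Rightarrow> ('a \<Rightarrow> 'x \<Rightarrow> 'a \<Rightarrow> 's)
    \<Rightarrow> ('a \<Rightarrow> 'x \<Rightarrow> 'y \<Rightarrow> 's) \<Rightarrow> 'x list \<Rightarrow> 'y list \<Rightarrow> 's" where
  "mealy_n1 A sg d om u v =
    (if u = [] then (\<Sum>a\<in>A. sg a)
     else (\<Sum>as\<in>state_seqs A (length u).
            sg (as ! 0) * prod_list (map (\<lambda>i. om (as ! i) (u ! i) (v ! i) *
                 (if i + 1 < length u then dword A d (take (i + 1) u) (as ! 0) (as ! (i + 1)) else 1))
               [0..<length u])))"

definition moore_1n :: "'b set \<Rightarrow> ('b \<Rightarrow> 's::{semiring_0,monoid_mult}) \<Rightarrow> ('b \<Rightarrow> 'x \<Rightarrow> 'b \<Rightarrow> 's)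
    \<Rightarrow> ('b \<Rightarrow> 'y \<Rightarrow> 's) \<Rightarrow> 'x list \<Rightarrow> 'y list \<Rightarrow> 's" where
  "moore_1n B sg d om u v =
    (if u = [] then (\<Sum>b\<in>B. sg b)
     else (\<Sum>bs\<in>state_seqs B (length u + 1).
            sg (bs ! 0) * prod_list (map (\<lambda>i. d (bs ! i) (u ! i) (bs ! (i + 1)) * om (bs ! (i + 1)) (v ! i))
               [0..<length u])))"

definition moore_n1 :: "'b set \<Rightarrow> ('b \<Rightarrow> 's::{semiring_0,monoid_mult}) \<Rightarrow> ('b \<Rightarrow> 'x \<Rightarrow> 'b \<Rightarrow> 's)
    \<Rightarrow> ('b \<Rightarrow> 'y \<Rightarrow> 's) \<Rightarrow> 'x list \<Rightarrow> 'y list \<Rightarrow> 's" where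
  "moore_n1 B sg d om u v =
    (if u = [] then (\<Sum>b\<in>B. sg b)
     else (\<Sum>bs\<in>state_seqs B (length u + 1).
            sg (bs ! 0) * prod_list (map (\<lambda>i. dword B d (take (i + 1) u) (bs ! 0) (bs ! (i + 1)) * om (bs ! (i + 1)) (v ! i))
               [0..<length u])))"

end

theory Submission
  imports Defs
begin

text \<open>The Moore automaton has states (a, None) and (a, Some x) for a \<in> A and x \<in> X. The state
(a, Some x) remembers the letter x just read and emits \<omega>_A(a, x, -); the Mealy transition weight
\<delta>_A(a, x, a') is charged one step later, when (a, Some x) is left. The start states (a, None) carry
\<sigma>_A(a) and move with weight 1 to (a, Some x). So the Moore paths of nonzero weight are exactly the
images (a_0, None), (a_0, Some x_1), ..., (a_{n-1}, Some x_n) of the Mealy paths a_0 ... a_{n-1}, and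
they carry the same weight. For the n1 behaviour one uses in addition that the Moore weight of the
word w x from (a_0, None) to (a, Some x) is the Mealy weight \<delta>_A,w(a_0, a). Finally the states are
relabelled by natural numbers.\<close>

lemma prod_list_upt_nonzero_factor:
  "prod_list (map f [0..<n]) \<noteq> (0::'s::{semiring_0,monoid_mult}) \<Longrightarrow> i < n \<Longrightarrow> f i \<noteq> 0"
proof -
  have "(0::'s) \<in> set xs \<Longrightarrow> prod_list xs = 0" for xs by (induction xs) auto
  then show "prod_list (map f [0..<n]) \<noteq> 0 \<Longrightarrow> i < n \<Longrightarrow> f i \<noteq> 0" by force
qed

lemma prod_list_upt_shift:
  fixes c w :: "nat \<Rightarrow> 's::monoid_mult"
  assumes "c 0 = 1" "c n = 1"
  shows "prod_list (map (\<lambda>i. c i * w i) [0..<n]) = prod_list (map (\<lambda>i. w i * c (Suc i)) [0..<n])"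
proof -
  have "c 0 * prod_list (map (\<lambda>i. w i * c (Suc i)) [0..<m]) = prod_list (map (\<lambda>i. c i * w i) [0..<m]) * c m" for m
    by (induction m) (simp_all add: mult.assoc[symmetric])
  from this[of n] show ?thesis using assms by simp
qed

lemma finite_state_seqs: "finite Q \<Longrightarrow> finite (state_seqs Q n)"
  unfolding state_seqs_def using finite_lists_length_eq[of Q n] by (simp add: conj_commute)

lemma state_seqs_image: "state_seqs (h ` B) n = map h ` state_seqs B n"
proof (intro set_eqI iffI)
  fix cs assume "cs \<in> state_seqs (h ` B) n"
  then have "cs \<in> lists (h ` B)" "length cs = n" by (auto simp: state_seqs_def)
  then obtain bs where "bs \<in> lists B" "cs = map h bs" "length bs = n"
    unfolding lists_image by force
  then show "cs \<in> map h ` state_seqs B n" by (auto simp: state_seqs_def)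
qed (fastforce simp: state_seqs_def)

lemma inj_on_map_state_seqs: "inj_on h B \<Longrightarrow> inj_on (map h) (state_seqs B n)"
  by (rule inj_on_subset[OF inj_on_map_lists]) (auto simp: state_seqs_def)

lemma dword_rename:
  assumes inv: "\<And>b. b \<in> B \<Longrightarrow> g (h b) = b" and "p \<in> B" "q \<in> B"
  shows "dword (h ` B) (\<lambda>c x c'. d (g c) x (g c')) w (h p) (h q) = dword B d w p q"
  using \<open>p \<in> B\<close>
proof (induction w arbitrary: p rule: induct_list012)
  case 1
  have "h p = h q \<longleftrightarrow> p = q" using inv 1 \<open>q \<in> B\<close> by metis
  then show ?case by simp
next
  case (2 x)
  then show ?case using inv \<open>q \<in> B\<close> by simp
next
  case (3 x y w)
  have "inj_on h B" using inv by (rule inj_on_inverseI)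
  then show ?case using 3 inv by (simp add: sum.reindex)
qed

lemma
  fixes h :: "'b \<Rightarrow> 'c" and sg :: "'b \<Rightarrow> 's::{semiring_0,monoid_mult}"
  assumes inv: "\<And>b. b \<in> B \<Longrightarrow> g (h b) = b"
  shows moore_1n_rename: "moore_1n (h ` B) (\<lambda>c. sg (g c)) (\<lambda>c x c'. d (g c) x (g c')) (\<lambda>c. om (g c)) u v
           = moore_1n B sg d om u v"
    and moore_n1_rename: "moore_n1 (h ` B) (\<lambda>c. sg (g c)) (\<lambda>c x c'. d (g c) x (g c')) (\<lambda>c. om (g c)) u v
           = moore_n1 B sg d om u v"
proof -
  have inj: "inj_on h B" using inv by (rule inj_on_inverseI)
  have sum_init: "(\<Sum>c\<in>h ` B. sg (g c)) = (\<Sum>b\<in>B. sg b)"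
    using inj inv by (simp add: sum.reindex)
  have sum_paths: "(\<Sum>cs\<in>state_seqs (h ` B) m. F cs) = (\<Sum>bs\<in>state_seqs B m. F (map h bs))"
    for F :: "'c list \<Rightarrow> 's" and m
    unfolding state_seqs_image using inj_on_map_state_seqs[OF inj] by (simp add: sum.reindex)
  have nth: "map h bs ! i = h (bs ! i)" "g (h (bs ! i)) = bs ! i" "bs ! i \<in> B"
    if "bs \<in> state_seqs B m" "i < m" for bs m i
    using that inv by (auto simp: state_seqs_def subset_code(1))
  show "moore_1n (h ` B) (\<lambda>c. sg (g c)) (\<lambda>c x c'. d (g c) x (g c')) (\<lambda>c. om (g c)) u v
      = moore_1n B sg d om u v"
    unfolding moore_1n_def sum_init sum_paths
    by (intro if_cong sum.cong arg_cong2[where f="(*)"] arg_cong[where f=prod_list] map_cong refl)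
       (auto simp: nth)
  show "moore_n1 (h ` B) (\<lambda>c. sg (g c)) (\<lambda>c x c'. d (g c) x (g c')) (\<lambda>c. om (g c)) u v
      = moore_n1 B sg d om u v"
    unfolding moore_n1_def sum_init sum_paths
    by (intro if_cong sum.cong arg_cong2[where f="(*)"] arg_cong[where f=prod_list] map_cong refl)
       (auto simp: nth dword_rename[where B=B and g=g and h=h, OF inv])
qed

lemma dword_Cons: "w \<noteq> [] \<Longrightarrow> dword Q d (x # w) p q = (\<Sum>r\<in>Q. d p x r * dword Q d w r q)"
  by (cases w) simp_all

definition moore_of_mealy_states :: "'a set \<Rightarrow> 'x set \<Rightarrow> ('a \<times> 'x option) set" where
  "moore_of_mealy_states A X = A \<times> insert None (Some ` X)"

definition moore_of_mealy_init :: "('a \<Rightarrow> 's::zero) \<Rightarrow> 'a \<times> 'x option \<Rightarrow> 's" where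
  "moore_of_mealy_init sg b = (if snd b = None then sg (fst b) else 0)"

definition moore_of_mealy_trans ::
    "('a \<Rightarrow> 'x \<Rightarrow> 'a \<Rightarrow> 's::{zero,one}) \<Rightarrow> 'a \<times> 'x option \<Rightarrow> 'x \<Rightarrow> 'a \<times> 'x option \<Rightarrow> 's" where
  "moore_of_mealy_trans d b x b' =
    (if snd b' = Some x then
       (case snd b of None \<Rightarrow> if fst b = fst b' then 1 else 0 | Some z \<Rightarrow> d (fst b) z (fst b'))
     else 0)"

definition moore_of_mealy_out :: "('a \<Rightarrow> 'x \<Rightarrow> 'y \<Rightarrow> 's::zero) \<Rightarrow> 'a \<times> 'x option \<Rightarrow> 'y \<Rightarrow> 's" where
  "moore_of_mealy_out om b y = (case snd b of None \<Rightarrow> 0 | Some x \<Rightarrow> om (fst b) x y)"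

lemma finite_moore_of_mealy_states: "finite A \<Longrightarrow> finite X \<Longrightarrow> finite (moore_of_mealy_states A X)"
  by (simp add: moore_of_mealy_states_def)

lemma moore_of_mealy_states_nonempty: "A \<noteq> {} \<Longrightarrow> moore_of_mealy_states A X \<noteq> {}"
  by (simp add: moore_of_mealy_states_def)

lemma card_moore_of_mealy_states:
  "finite X \<Longrightarrow> card (moore_of_mealy_states A X) = card A * (card X + 1)"
  by (simp add: moore_of_mealy_states_def card_cartesian_product card_image)

lemma sum_moore_of_mealy_init:
  "finite X \<Longrightarrow> (\<Sum>b\<in>moore_of_mealy_states A X. moore_of_mealy_init sg b) = (\<Sum>a\<in>A. sg a)"
  unfolding moore_of_mealy_states_def moore_of_mealy_init_def
  by (simp add: sum.cartesian_product' sum.delta)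

lemma sum_moore_of_mealy_states_Some:
  assumes "finite X" "x \<in> X"
  shows "(\<Sum>b\<in>moore_of_mealy_states A X. if snd b = Some x then f (fst b) else 0)
       = (\<Sum>a\<in>A. f a :: 's::comm_monoid_add)"
  using assms unfolding moore_of_mealy_states_def
  by (simp add: sum.cartesian_product' sum.delta')

lemma dword_moore_of_mealy_Some:
  fixes dA :: "'a \<Rightarrow> 'x \<Rightarrow> 'a \<Rightarrow> 's::{semiring_0,monoid_mult}"
  assumes "finite X" "set w \<subseteq> X"
  shows "dword (moore_of_mealy_states A X) (moore_of_mealy_trans dA) (w @ [x]) (a', Some z) (a, ox)
       = (if ox = Some x then dword A dA (z # w) a' a else 0)"
  using assms(2)
proof (induction w arbitrary: a' z)
  case Nil
  then show ?case by (simp add: moore_of_mealy_trans_def)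
next
  case (Cons y w)
  let ?B = "moore_of_mealy_states A X" and ?d = "moore_of_mealy_trans dA"
  have "dword ?B ?d ((y # w) @ [x]) (a', Some z) (a, ox)
      = (\<Sum>b\<in>?B. ?d (a', Some z) y b * dword ?B ?d (w @ [x]) b (a, ox))"
    by (simp add: dword_Cons)
  also have "\<dots> = (\<Sum>b\<in>?B. if snd b = Some y
                           then dA a' z (fst b) * dword ?B ?d (w @ [x]) (fst b, Some y) (a, ox) else 0)"
    by (rule sum.cong[OF refl]) (auto simp: moore_of_mealy_trans_def)
  also have "\<dots> = (\<Sum>b\<in>A. dA a' z b * dword ?B ?d (w @ [x]) (b, Some y) (a, ox))"
    using Cons.prems assms(1) by (intro sum_moore_of_mealy_states_Some) auto
  also have "\<dots> = (if ox = Some x then dword A dA (z # y # w) a' a else 0)"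
    using Cons by (simp add: sum_distrib_left)
  finally show ?case .
qed

lemma dword_moore_of_mealy_None:
  fixes dA :: "'a \<Rightarrow> 'x \<Rightarrow> 'a \<Rightarrow> 's::{semiring_0,monoid_mult}"
  assumes "finite A" "finite X" "set w \<subseteq> X" "a0 \<in> A"
  shows "dword (moore_of_mealy_states A X) (moore_of_mealy_trans dA) (w @ [x]) (a0, None) (a, ox)
       = (if ox = Some x then dword A dA w a0 a else 0)"
proof (cases w)
  case Nil
  then show ?thesis by (simp add: moore_of_mealy_trans_def)
next
  case (Cons y w')
  let ?B = "moore_of_mealy_states A X" and ?d = "moore_of_mealy_trans dA"
  have "dword ?B ?d (w @ [x]) (a0, None) (a, ox)
      = (\<Sum>b\<in>?B. if b = (a0, Some y) then dword ?B ?d (w' @ [x]) b (a, ox) else 0)"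
    using Cons by (auto simp: dword_Cons moore_of_mealy_trans_def prod_eq_iff intro!: sum.cong)
  also have "\<dots> = dword ?B ?d (w' @ [x]) (a0, Some y) (a, ox)"
    using assms Cons by (simp add: finite_moore_of_mealy_states) (simp add: moore_of_mealy_states_def)
  also have "\<dots> = (if ox = Some x then dword A dA w a0 a else 0)"
    using assms Cons by (simp add: dword_moore_of_mealy_Some)
  finally show ?thesis .
qed

definition moore_path_of_mealy :: "'x list \<Rightarrow> 'a list \<Rightarrow> ('a \<times> 'x option) list" where
  "moore_path_of_mealy u as = (as ! 0, None) # map (\<lambda>i. (as ! i, Some (u ! i))) [0..<length u]"

lemma moore_path_of_mealy_nth:
  "moore_path_of_mealy u as ! 0 = (as ! 0, None)"
  "i < length u \<Longrightarrow> moore_path_of_mealy u as ! Suc i = (as ! i, Some (u ! i))"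
  by (simp_all add: moore_path_of_mealy_def)

lemma moore_path_of_mealy_in_state_seqs:
  assumes "as \<in> state_seqs A (length u)" "set u \<subseteq> X" "u \<noteq> []"
  shows "moore_path_of_mealy u as \<in> state_seqs (moore_of_mealy_states A X) (Suc (length u))"
proof -
  have "as ! i \<in> A" "u ! i \<in> X" if "i < length u" for i
    using assms that by (auto simp: state_seqs_def)
  then show ?thesis
    using assms(3) by (auto simp: state_seqs_def moore_path_of_mealy_def moore_of_mealy_states_def)
qed

lemma inj_on_moore_path_of_mealy: "inj_on (moore_path_of_mealy u) (state_seqs A (length u))"
proof (rule inj_onI)
  fix as as' assume "as \<in> state_seqs A (length u)" "as' \<in> state_seqs A (length u)"
    and eq: "moore_path_of_mealy u as = moore_path_of_mealy u as'"
  then have "length as = length u" "length as' = length u" by (simp_all add: state_seqs_def)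
  moreover have "as ! i = as' ! i" if "i < length u" for i
    using arg_cong[OF eq, of "\<lambda>p. p ! Suc i"] that by (simp add: moore_path_of_mealy_nth)
  ultimately show "as = as'" by (simp add: nth_equalityI)
qed

lemma moore_path_of_mealy_imageI:
  assumes bs: "bs \<in> state_seqs (moore_of_mealy_states A X) (Suc (length u))" and "u \<noteq> []"
    and start: "snd (bs ! 0) = None" "fst (bs ! 1) = fst (bs ! 0)"
    and letters: "\<forall>i<length u. snd (bs ! Suc i) = Some (u ! i)"
  shows "bs \<in> moore_path_of_mealy u ` state_seqs A (length u)"
proof
  let ?as = "map fst (tl bs)"
  have len: "length bs = Suc (length u)" and "set bs \<subseteq> moore_of_mealy_states A X"
    using bs by (simp_all add: state_seqs_def)
  then show "?as \<in> state_seqs A (length u)"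
    by (auto simp: state_seqs_def moore_of_mealy_states_def dest!: list.set_sel(2)[rotated])
  show "bs = moore_path_of_mealy u ?as"
  proof (rule nth_equalityI)
    fix i assume "i < length bs"
    then show "bs ! i = moore_path_of_mealy u ?as ! i"
      using start letters len \<open>u \<noteq> []\<close>
      by (cases i) (simp_all add: moore_path_of_mealy_nth nth_tl prod_eq_iff)
  qed (simp add: len moore_path_of_mealy_def)
qed

lemma sum_state_seqs_moore_of_mealy:
  assumes "finite A" "finite X" "set u \<subseteq> X" "u \<noteq> []"
    and vanish: "\<And>bs. bs \<in> state_seqs (moore_of_mealy_states A X) (Suc (length u)) \<Longrightarrow> g bs \<noteq> 0 \<Longrightarrow>
      snd (bs ! 0) = None \<and> fst (bs ! 1) = fst (bs ! 0) \<and> (\<forall>i<length u. snd (bs ! Suc i) = Some (u ! i))"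
  shows "(\<Sum>bs\<in>state_seqs (moore_of_mealy_states A X) (Suc (length u)). g bs)
       = (\<Sum>as\<in>state_seqs A (length u). g (moore_path_of_mealy u as) :: 's::comm_monoid_add)"
proof -
  let ?S = "state_seqs (moore_of_mealy_states A X) (Suc (length u))"
    and ?P = "moore_path_of_mealy u ` state_seqs A (length u)"
  have "g bs = 0" if "bs \<in> ?S - ?P" for bs
  proof (rule ccontr)
    assume "g bs \<noteq> 0"
    with that have "bs \<in> ?P"
      using vanish[of bs] moore_path_of_mealy_imageI[of bs A X u] \<open>u \<noteq> []\<close> by simp
    with that show False by simp
  qed
  moreover have "?P \<subseteq> ?S"
    using moore_path_of_mealy_in_state_seqs assms(3,4) by blast
  ultimately have "(\<Sum>bs\<in>?S. g bs) = (\<Sum>bs\<in>?P. g bs)"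
    using assms(1,2) by (intro sum.mono_neutral_right finite_state_seqs finite_moore_of_mealy_states) blast+
  then show ?thesis
    by (simp add: sum.reindex[OF inj_on_moore_path_of_mealy])
qed

lemma moore_of_mealy_trans_nonzero:
  "moore_of_mealy_trans d b x b' \<noteq> 0 \<Longrightarrow> snd b' = Some x \<and> (snd b = None \<longrightarrow> fst b' = fst b)"
  by (auto simp: moore_of_mealy_trans_def split: option.splits if_splits)

lemma moore_1n_summand_moore_path_of_mealy:
  fixes sgA :: "'a \<Rightarrow> 's::{semiring_0,monoid_mult}" and u :: "'x list" and as :: "'a list"
  defines "p \<equiv> moore_path_of_mealy u as"
  shows "moore_of_mealy_init sgA (p ! 0) * prod_list (map (\<lambda>i. moore_of_mealy_trans dA (p ! i) (u ! i) (p ! Suc i)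
            * moore_of_mealy_out omA (p ! Suc i) (v ! i)) [0..<length u])
       = sgA (as ! 0) * prod_list (map (\<lambda>i. omA (as ! i) (u ! i) (v ! i)
            * (if i + 1 < length u then dA (as ! i) (u ! i) (as ! (i + 1)) else 1)) [0..<length u])"
proof -
  define c where "c i = (if i = 0 \<or> length u \<le> i then 1 else dA (as ! (i - 1)) (u ! (i - 1)) (as ! i))" for i
  define w where "w i = omA (as ! i) (u ! i) (v ! i)" for i
  have "moore_of_mealy_trans dA (p ! i) (u ! i) (p ! Suc i) * moore_of_mealy_out omA (p ! Suc i) (v ! i)
      = c i * w i" if "i < length u" for i
    using that by (cases i)
      (simp_all add: p_def moore_path_of_mealy_nth moore_of_mealy_trans_def moore_of_mealy_out_def c_def w_def)
  then have "prod_list (map (\<lambda>i. moore_of_mealy_trans dA (p ! i) (u ! i) (p ! Suc i)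
            * moore_of_mealy_out omA (p ! Suc i) (v ! i)) [0..<length u])
      = prod_list (map (\<lambda>i. c i * w i) [0..<length u])"
    by (intro arg_cong[where f = prod_list] map_cong) auto
  also have "\<dots> = prod_list (map (\<lambda>i. w i * c (Suc i)) [0..<length u])"
    by (rule prod_list_upt_shift) (simp_all add: c_def)
  also have "\<dots> = prod_list (map (\<lambda>i. omA (as ! i) (u ! i) (v ! i)
            * (if i + 1 < length u then dA (as ! i) (u ! i) (as ! (i + 1)) else 1)) [0..<length u])"
    by (intro arg_cong[where f = prod_list] map_cong) (auto simp: c_def w_def)
  finally show ?thesis
    by (simp add: p_def moore_path_of_mealy_nth moore_of_mealy_init_def)
qed

lemma moore_1n_moore_of_mealy:
  fixes sgA :: "'a \<Rightarrow> 's::{semiring_0,monoid_mult}"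
  assumes "finite A" "finite X" "set u \<subseteq> X"
  shows "moore_1n (moore_of_mealy_states A X) (moore_of_mealy_init sgA) (moore_of_mealy_trans dA)
           (moore_of_mealy_out omA) u v = mealy_1n A sgA dA omA u v"
proof (cases "u = []")
  case True
  then show ?thesis using assms by (simp add: moore_1n_def mealy_1n_def sum_moore_of_mealy_init)
next
  case False
  let ?g = "\<lambda>bs. moore_of_mealy_init sgA (bs ! 0) * prod_list (map (\<lambda>i.
    moore_of_mealy_trans dA (bs ! i) (u ! i) (bs ! Suc i) * moore_of_mealy_out omA (bs ! Suc i) (v ! i)) [0..<length u])"
  have "moore_1n (moore_of_mealy_states A X) (moore_of_mealy_init sgA) (moore_of_mealy_trans dA)
           (moore_of_mealy_out omA) u v = (\<Sum>bs\<in>state_seqs (moore_of_mealy_states A X) (Suc (length u)). ?g bs)"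
    using False by (simp add: moore_1n_def)
  also have "\<dots> = (\<Sum>as\<in>state_seqs A (length u). ?g (moore_path_of_mealy u as))"
  proof (rule sum_state_seqs_moore_of_mealy[OF assms False])
    fix bs assume "?g bs \<noteq> 0"
    then have "moore_of_mealy_init sgA (bs ! 0) \<noteq> 0" and factors: "prod_list (map (\<lambda>i.
      moore_of_mealy_trans dA (bs ! i) (u ! i) (bs ! Suc i) * moore_of_mealy_out omA (bs ! Suc i) (v ! i))
        [0..<length u]) \<noteq> 0"
      by auto
    then have "snd (bs ! 0) = None" by (simp add: moore_of_mealy_init_def split: if_splits)
    moreover have "moore_of_mealy_trans dA (bs ! i) (u ! i) (bs ! Suc i) \<noteq> 0" if "i < length u" for i
      using prod_list_upt_nonzero_factor[OF factors that] by auto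
    ultimately show "snd (bs ! 0) = None \<and> fst (bs ! 1) = fst (bs ! 0) \<and> (\<forall>i<length u. snd (bs ! Suc i) = Some (u ! i))"
      using moore_of_mealy_trans_nonzero False by (metis One_nat_def length_greater_0_conv)
  qed
  also have "\<dots> = mealy_1n A sgA dA omA u v"
    using False by (simp add: mealy_1n_def moore_1n_summand_moore_path_of_mealy)
  finally show ?thesis .
qed

lemma dword_moore_of_mealy_take:
  fixes dA :: "'a \<Rightarrow> 'x \<Rightarrow> 'a \<Rightarrow> 's::{semiring_0,monoid_mult}"
  assumes "finite A" "finite X" "set u \<subseteq> X" "i < length u" "a0 \<in> A"
  shows "dword (moore_of_mealy_states A X) (moore_of_mealy_trans dA) (take (Suc i) u) (a0, None) b
       = (if snd b = Some (u ! i) then dword A dA (take i u) a0 (fst b) else 0)"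
proof -
  have "set (take i u) \<subseteq> X" using assms(3) by (meson order_trans set_take_subset)
  then show ?thesis
    using dword_moore_of_mealy_None[OF assms(1,2) _ assms(5), of "take i u" dA "u ! i" "fst b" "snd b"] assms(4)
    by (simp add: take_Suc_conv_app_nth)
qed

lemma moore_n1_summand_moore_path_of_mealy:
  fixes sgA :: "'a \<Rightarrow> 's::{semiring_0,monoid_mult}" and u :: "'x list" and as :: "'a list"
  assumes "finite A" "finite X" "set u \<subseteq> X" "as \<in> state_seqs A (length u)" "u \<noteq> []"
  defines "p \<equiv> moore_path_of_mealy u as"
  shows "moore_of_mealy_init sgA (p ! 0) * prod_list (map (\<lambda>i.
            dword (moore_of_mealy_states A X) (moore_of_mealy_trans dA) (take (Suc i) u) (p ! 0) (p ! Suc i)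
            * moore_of_mealy_out omA (p ! Suc i) (v ! i)) [0..<length u])
       = sgA (as ! 0) * prod_list (map (\<lambda>i. omA (as ! i) (u ! i) (v ! i)
            * (if i + 1 < length u then dword A dA (take (i + 1) u) (as ! 0) (as ! (i + 1)) else 1)) [0..<length u])"
proof -
  have "as ! 0 \<in> A" using assms(4,5) by (auto simp: state_seqs_def)
  define c where "c i = (if i < length u then dword A dA (take i u) (as ! 0) (as ! i) else 1)" for i
  define w where "w i = omA (as ! i) (u ! i) (v ! i)" for i
  have "dword (moore_of_mealy_states A X) (moore_of_mealy_trans dA) (take (Suc i) u) (p ! 0) (p ! Suc i)
      * moore_of_mealy_out omA (p ! Suc i) (v ! i) = c i * w i" if "i < length u" for i
    using that dword_moore_of_mealy_take[OF assms(1-3) that \<open>as ! 0 \<in> A\<close>, of dA "(as ! i, Some (u ! i))"]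
    by (simp add: p_def moore_path_of_mealy_nth moore_of_mealy_out_def c_def w_def)
  then have "prod_list (map (\<lambda>i.
            dword (moore_of_mealy_states A X) (moore_of_mealy_trans dA) (take (Suc i) u) (p ! 0) (p ! Suc i)
            * moore_of_mealy_out omA (p ! Suc i) (v ! i)) [0..<length u])
      = prod_list (map (\<lambda>i. c i * w i) [0..<length u])"
    by (intro arg_cong[where f = prod_list] map_cong) auto
  also have "\<dots> = prod_list (map (\<lambda>i. w i * c (Suc i)) [0..<length u])"
    by (rule prod_list_upt_shift) (simp_all add: c_def)
  also have "\<dots> = prod_list (map (\<lambda>i. omA (as ! i) (u ! i) (v ! i)
            * (if i + 1 < length u then dword A dA (take (i + 1) u) (as ! 0) (as ! (i + 1)) else 1)) [0..<length u])"
    by (intro arg_cong[where f = prod_list] map_cong) (auto simp: c_def w_def)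
  finally show ?thesis
    by (simp add: p_def moore_path_of_mealy_nth moore_of_mealy_init_def)
qed

lemma moore_n1_moore_of_mealy:
  fixes sgA :: "'a \<Rightarrow> 's::{semiring_0,monoid_mult}"
  assumes "finite A" "finite X" "set u \<subseteq> X"
  shows "moore_n1 (moore_of_mealy_states A X) (moore_of_mealy_init sgA) (moore_of_mealy_trans dA)
           (moore_of_mealy_out omA) u v = mealy_n1 A sgA dA omA u v"
proof (cases "u = []")
  case True
  then show ?thesis using assms by (simp add: moore_n1_def mealy_n1_def sum_moore_of_mealy_init)
next
  case False
  let ?B = "moore_of_mealy_states A X" and ?d = "moore_of_mealy_trans dA"
  let ?g = "\<lambda>bs. moore_of_mealy_init sgA (bs ! 0) * prod_list (map (\<lambda>i.
    dword ?B ?d (take (i + 1) u) (bs ! 0) (bs ! (i + 1)) * moore_of_mealy_out omA (bs ! (i + 1)) (v ! i)) [0..<length u])"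
  have "moore_n1 ?B (moore_of_mealy_init sgA) ?d (moore_of_mealy_out omA) u v
      = (\<Sum>bs\<in>state_seqs ?B (Suc (length u)). ?g bs)"
    using False by (simp add: moore_n1_def)
  also have "\<dots> = (\<Sum>as\<in>state_seqs A (length u). ?g (moore_path_of_mealy u as))"
  proof (rule sum_state_seqs_moore_of_mealy[OF assms False])
    fix bs assume bs: "bs \<in> state_seqs ?B (Suc (length u))" and "?g bs \<noteq> 0"
    then have "moore_of_mealy_init sgA (bs ! 0) \<noteq> 0" and factors: "prod_list (map (\<lambda>i.
      dword ?B ?d (take (i + 1) u) (bs ! 0) (bs ! (i + 1)) * moore_of_mealy_out omA (bs ! (i + 1)) (v ! i))
        [0..<length u]) \<noteq> 0"
      by auto
    then have start: "bs ! 0 = (fst (bs ! 0), None)"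
      by (simp add: moore_of_mealy_init_def prod_eq_iff split: if_splits)
    have "bs ! 0 \<in> ?B"
      using bs by (auto simp: state_seqs_def)
    then have "fst (bs ! 0) \<in> A"
      by (auto simp: moore_of_mealy_states_def)
    then have "snd (bs ! Suc i) = Some (u ! i) \<and> dword A dA (take i u) (fst (bs ! 0)) (fst (bs ! Suc i)) \<noteq> 0"
      if "i < length u" for i
      using prod_list_upt_nonzero_factor[OF factors that] start
        dword_moore_of_mealy_take[OF assms that, of "fst (bs ! 0)" dA "bs ! Suc i"]
      by (auto split: if_splits)
    \<comment> \<open>At i = 0 the Mealy factor is the identity matrix, which forces fst (bs ! 1) = fst (bs ! 0).\<close>
    from this[of 0] this start False show "snd (bs ! 0) = None \<and> fst (bs ! 1) = fst (bs ! 0)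
        \<and> (\<forall>i<length u. snd (bs ! Suc i) = Some (u ! i))"
      by (auto split: if_splits)
  qed
  also have "\<dots> = mealy_n1 A sgA dA omA u v"
    using False by (simp add: mealy_n1_def moore_n1_summand_moore_path_of_mealy[OF assms] cong: sum.cong)
  finally show ?thesis .
qed

theorem theorem4:
  fixes A :: "'a set" and X :: "'x set" and Y :: "'y set"
    and sgA :: "'a \<Rightarrow> 's::{semiring_0,monoid_mult}"
    and dA :: "'a \<Rightarrow> 'x \<Rightarrow> 'a \<Rightarrow> 's"
    and omA :: "'a \<Rightarrow> 'x \<Rightarrow> 'y \<Rightarrow> 's"
  assumes "finite A" "A \<noteq> {}" "finite X" "X \<noteq> {}" "finite Y" "Y \<noteq> {}"
  shows "\<exists>(B :: nat set) (sgB :: nat \<Rightarrow> 's) (dB :: nat \<Rightarrow> 'x \<Rightarrow> nat \<Rightarrow> 's) (omB :: nat \<Rightarrow> 'y \<Rightarrow> 's).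
           finite B \<and> B \<noteq> {} \<and> card B \<le> card A * (card X + 1) \<and>
           (\<forall>u v. u \<in> lists X \<longrightarrow> v \<in> lists Y \<longrightarrow> length u = length v \<longrightarrow>
              mealy_1n A sgA dA omA u v = moore_1n B sgB dB omB u v \<and>
              mealy_n1 A sgA dA omA u v = moore_n1 B sgB dB omB u v)"
proof -
  let ?S = "moore_of_mealy_states A X"
  obtain h :: "'a \<times> 'x option \<Rightarrow> nat" where inj: "inj_on h ?S"
    using finite_imp_inj_to_nat_seg[OF finite_moore_of_mealy_states[OF assms(1,3)]] by blast
  define g where "g = the_inv_into ?S h"
  have inv: "g (h b) = b" if "b \<in> ?S" for b
    using inj that by (simp add: g_def the_inv_into_f_f)
  show ?thesis
  proof (intro exI conjI allI impI)
    show "finite (h ` ?S)" "h ` ?S \<noteq> {}"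
      using finite_moore_of_mealy_states[OF assms(1,3)] moore_of_mealy_states_nonempty[OF assms(2)]
      by simp_all
    show "card (h ` ?S) \<le> card A * (card X + 1)"
      using assms(3) inj by (simp add: card_image card_moore_of_mealy_states)
    fix u v assume "u \<in> lists X"
    then have "set u \<subseteq> X" by auto
    then show "mealy_1n A sgA dA omA u v = moore_1n (h ` ?S) (\<lambda>c. moore_of_mealy_init sgA (g c))
        (\<lambda>c x c'. moore_of_mealy_trans dA (g c) x (g c')) (\<lambda>c. moore_of_mealy_out omA (g c)) u v"
      and "mealy_n1 A sgA dA omA u v = moore_n1 (h ` ?S) (\<lambda>c. moore_of_mealy_init sgA (g c))
        (\<lambda>c x c'. moore_of_mealy_trans dA (g c) x (g c')) (\<lambda>c. moore_of_mealy_out omA (g c)) u v"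
      using assms(1,3) by (simp_all add: moore_1n_rename moore_n1_rename inv
          moore_1n_moore_of_mealy moore_n1_moore_of_mealy)
  qed
qed

end
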